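(* Let $(Q,\mathcal M)$ be a modulated quiver with $\mathcal M$ v-uniform with $\mathbb C$, and let $v$ be a vertex of $Q$ with no loop at $v$. Let $v^+=\{\alpha\in Q_1: s(\alpha)=v\}$, $v^-=\{\alpha\in Q_1:t(\alpha)=v\}$, and define a new modulation $\mathcal M'$ by $\mathcal M'(i)=\mathbb C$ for all $i\in Q_0$ and, for $\alpha\in Q_1$: $\mathcal M'(\alpha)=\mathbb C$ if $\alpha\in v^+\cup v^-$ and $\mathcal M(\alpha)=\overline{\mathbb C}$; $\mathcal M'(\alpha)=\overline{\mathbb C}$ if $\alpha\in v^+\cup v^-$ and $\mathcal M(\alpha)=\mathbb C$; $\mathcal M'(\alpha)=\mathcal M(\alpha)$ if $\alpha\notin v^+\cup v^-$. Then there is an isomorphism of $\mathbb R$-algebras $\phi:T(Q,\mathcal M)\to T(Q,\mathcal M')$ with $\phi(\mathcal M(p))=\mathcal M'(p)$ for every path $p$ of $Q$.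
   Context: Quivers $Q=(Q_0,Q_1,s,t)$ are finite; an arrow $\alpha$ goes from $s(\alpha)$ to $t(\alpha)$. Paths are written from right to left: a path of length $n\ge1$ is $p=\alpha_n\cdots\alpha_1$ with $t(\alpha_k)=s(\alpha_{k+1})$; each vertex $i$ has a trivial path $e_i$. Let $\mathbb H$ be the real quaternions. A modulation $\mathcal M$ of $Q$ assigns to each vertex $i$ a division ring $\mathcal M(i)\in\{\mathbb R,\mathbb C,\mathbb H\}$ and to each arrow $\alpha$ a simple $\mathcal M(t(\alpha))$-$\mathcal M(s(\alpha))$-bimodule $\mathcal M(\alpha)$ on which $\mathbb R$ acts centrally; $(Q,\mathcal M)$ is a modulated quiver. For the pair $(\mathbb C,\mathbb C)$ there are exactly two such simple bimodules up to isomorphism: $\mathbb C$ with action $a\cdot z\cdot b=azb$, and $\overline{\mathbb C}$, which is $\mathbb C$ as a set with action $a\cdot z\cdot b=az\bar b$. For a path $p=\alpha_n\cdots\alpha_1$ put $\mathcal M(p)=\mathcal M(\alpha_n)\otimes_{\mathcal M(s(\alpha_n))}\cdots\otimes_{\mathcal M(s(\alpha_2))}\mathcal M(\alpha_1)$, and $\mathcal M(e_i)=\mathcal M(i)$. The tensor algebra is $T(Q,\mathcal M)=\prod_{i\in Q_0}\mathcal M(i)\oplus\bigoplus_{p}\mathcal M(p)$ (sum over paths of length $\ge1$), the tensor algebra of the bimodule $\bigoplus_{\alpha}\mathcal M(\alpha)$ over $\prod_i\mathcal M(i)$. $\mathcal M$ is v-uniform with $D$ if $\mathcal M(i)=D$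 for all vertices $i$. *)

theory Defs
  imports Complex_Main
begin

record ('v, 'a) quiver =
  Qv :: "'v set"
  Qa :: "'a set"
  qs :: "'a \<Rightarrow> 'v"
  qt :: "'a \<Rightarrow> 'v"

definition wf_quiver :: "('v, 'a) quiver \<Rightarrow> bool" where
  "wf_quiver Q \<longleftrightarrow> finite (Qv Q) \<and> finite (Qa Q) \<and>
     (\<forall>\<alpha>\<in>Qa Q. qs Q \<alpha> \<in> Qv Q \<and> qt Q \<alpha> \<in> Qv Q)"

text \<open>The two simple C-C-bimodules (with R central): C and C-bar.
  A v-uniform modulation with C is given by choosing one of them per arrow.\<close>
datatype cbimod = Cstd | Cbar

fun bm_twist :: "cbimod \<Rightarrow> complex \<Rightarrow> complex" where
  "bm_twist Cstd = id"
| "bm_twist Cbar = cnj"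

definition bimod_action :: "cbimod \<Rightarrow> complex \<Rightarrow> complex \<Rightarrow> complex \<Rightarrow> complex" where
  "bimod_action B a z b = a * z * bm_twist B b"

fun flip_bimod :: "cbimod \<Rightarrow> cbimod" where
  "flip_bimod Cstd = Cbar"
| "flip_bimod Cbar = Cstd"

text \<open>Paths: a trivial path e_i, or a nonempty list of arrows listed in traversal
  order [alpha_1, ..., alpha_n] (the path alpha_n ... alpha_1), t(alpha_k) = s(alpha_(k+1)).\<close>
datatype ('v, 'a) qpath = Triv 'v | Arrs "'a list"

definition is_path :: "('v, 'a) quiver \<Rightarrow> ('v, 'a) qpath \<Rightarrow> bool" where
  "is_path Q p = (case p of Triv i \<Rightarrow> i \<in> Qv Q
     | Arrs as \<Rightarrow> as \<noteq> [] \<and> set as \<subseteq> Qa Q \<and>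
         (\<forall>k. Suc k < length as \<longrightarrow> qt Q (as ! k) = qs Q (as ! Suc k)))"

fun psrc :: "('v, 'a) quiver \<Rightarrow> ('v, 'a) qpath \<Rightarrow> 'v" where
  "psrc Q (Triv i) = i"
| "psrc Q (Arrs as) = qs Q (hd as)"

fun ptgt :: "('v, 'a) quiver \<Rightarrow> ('v, 'a) qpath \<Rightarrow> 'v" where
  "ptgt Q (Triv i) = i"
| "ptgt Q (Arrs as) = qt Q (last as)"

text \<open>Composition q p (first p, then q), defined when psrc q = ptgt p.\<close>
fun pconcat :: "('v, 'a) qpath \<Rightarrow> ('v, 'a) qpath \<Rightarrow> ('v, 'a) qpath" where
  "pconcat (Triv i) p = p"
| "pconcat q (Triv j) = q"
| "pconcat (Arrs a) (Arrs b) = Arrs (b @ a)"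

text \<open>M(p) = M(alpha_n) (x)_C ... (x)_C M(alpha_1) is identified with C via
  z_n (x) ... (x) z_1 |-> z_n tau_n(z_(n-1)) (tau_n tau_(n-1))(z_(n-2)) ...,
  under which its bimodule structure is a . z . b = a z tau_p(b), where tau_p is
  the composite of the twists of the arrows of p (id for trivial paths).\<close>
definition path_twist :: "('a \<Rightarrow> cbimod) \<Rightarrow> ('v, 'a) qpath \<Rightarrow> complex \<Rightarrow> complex" where
  "path_twist M p = (case p of Triv _ \<Rightarrow> id
     | Arrs as \<Rightarrow> foldr (\<lambda>\<alpha> f. bm_twist (M \<alpha>) \<circ> f) as id)"

text \<open>The tensor algebra T(Q,M) = prod_i M(i) (+) (+)_p M(p): an element is a
  finitely supported family (x_p) indexed by the paths of Q, x_p in M(p) = C.\<close>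
definition tcarrier :: "('v, 'a) quiver \<Rightarrow> (('v, 'a) qpath \<Rightarrow> complex) set" where
  "tcarrier Q = {x. finite {p. x p \<noteq> 0} \<and> (\<forall>p. x p \<noteq> 0 \<longrightarrow> is_path Q p)}"

definition tadd :: "(('v, 'a) qpath \<Rightarrow> complex) \<Rightarrow> (('v, 'a) qpath \<Rightarrow> complex) \<Rightarrow> ('v, 'a) qpath \<Rightarrow> complex" where
  "tadd x y = (\<lambda>p. x p + y p)"

definition tscale :: "real \<Rightarrow> (('v, 'a) qpath \<Rightarrow> complex) \<Rightarrow> ('v, 'a) qpath \<Rightarrow> complex" where
  "tscale r x = (\<lambda>p. complex_of_real r * x p)"

definition tmul :: "('v, 'a) quiver \<Rightarrow> ('a \<Rightarrow> cbimod) \<Rightarrow>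
    (('v, 'a) qpath \<Rightarrow> complex) \<Rightarrow> (('v, 'a) qpath \<Rightarrow> complex) \<Rightarrow> ('v, 'a) qpath \<Rightarrow> complex" where
  "tmul Q M x y = (\<lambda>r. \<Sum>(q, p) \<in> {(q, p). x q \<noteq> 0 \<and> y p \<noteq> 0 \<and>
       psrc Q q = ptgt Q p \<and> pconcat q p = r}. x q * path_twist M q (y p))"

definition tone :: "('v, 'a) quiver \<Rightarrow> ('v, 'a) qpath \<Rightarrow> complex" where
  "tone Q = (\<lambda>p. case p of Triv i \<Rightarrow> (if i \<in> Qv Q then 1 else 0) | Arrs _ \<Rightarrow> 0)"

definition summand :: "('v, 'a) quiver \<Rightarrow> ('v, 'a) qpath \<Rightarrow> (('v, 'a) qpath \<Rightarrow> complex) set" where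
  "summand Q p = {x \<in> tcarrier Q. \<forall>q. q \<noteq> p \<longrightarrow> x q = 0}"

definition R_alg_iso :: "('v, 'a) quiver \<Rightarrow> ('a \<Rightarrow> cbimod) \<Rightarrow> ('a \<Rightarrow> cbimod) \<Rightarrow>
    ((('v, 'a) qpath \<Rightarrow> complex) \<Rightarrow> (('v, 'a) qpath \<Rightarrow> complex)) \<Rightarrow> bool" where
  "R_alg_iso Q M M' \<phi> \<longleftrightarrow>
     bij_betw \<phi> (tcarrier Q) (tcarrier Q) \<and>
     (\<forall>x\<in>tcarrier Q. \<forall>y\<in>tcarrier Q. \<phi> (tadd x y) = tadd (\<phi> x) (\<phi> y)) \<and>
     (\<forall>r. \<forall>x\<in>tcarrier Q. \<phi> (tscale r x) = tscale r (\<phi> x)) \<and>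
     (\<forall>x\<in>tcarrier Q. \<forall>y\<in>tcarrier Q. \<phi> (tmul Q M x y) = tmul Q M' (\<phi> x) (\<phi> y)) \<and>
     \<phi> (tone Q) = tone Q"

end

theory Submission
  imports Defs
begin

text \<open>All twists are powers of complex conjugation, so they commute, and the twist of a path
  is conjugation raised to the parity of its \<open>Cbar\<close>-arrows. Flipping the bimodule of every
  arrow that crosses the boundary of a vertex set \<open>S\<close> changes this parity by
  \<open>[s(p) \<in> S] + [t(p) \<in> S]\<close>, and that is exactly compensated by conjugating the coordinate
  \<open>x\<^sub>p\<close> of every path \<open>p\<close> ending in \<open>S\<close>. For \<open>S = {v}\<close> with no loop at \<open>v\<close>, the arrows
  crossing the boundary of \<open>S\<close> are exactly the arrows incident to \<open>v\<close>.\<close>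

definition cnj_if :: "bool \<Rightarrow> complex \<Rightarrow> complex" where
  "cnj_if b z = (if b then cnj z else z)"

lemma cnj_if_cnj_if [simp]: "cnj_if a (cnj_if b z) = cnj_if (a \<noteq> b) z"
  by (auto simp: cnj_if_def)

lemma cnj_if_False [simp]: "cnj_if False z = z"
  by (simp add: cnj_if_def)

lemma cnj_if_eq_0_iff [simp]: "cnj_if b z = 0 \<longleftrightarrow> z = 0"
  by (auto simp: cnj_if_def)

lemma cnj_if_mult: "cnj_if b (x * y) = cnj_if b x * cnj_if b y"
  by (auto simp: cnj_if_def)

lemma cnj_if_sum: "cnj_if b (sum f A) = (\<Sum>i\<in>A. cnj_if b (f i))"
  by (auto simp: cnj_if_def)

lemma bm_twist_eq_cnj_if: "bm_twist B z = cnj_if (B = Cbar) z"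
  by (cases B) (auto simp: cnj_if_def)

definition twist_parity :: "('a \<Rightarrow> cbimod) \<Rightarrow> 'a list \<Rightarrow> bool" where
  "twist_parity M as = foldr (\<lambda>\<alpha> b. (M \<alpha> = Cbar) \<noteq> b) as False"

lemma twist_parity_Nil [simp]: "twist_parity M [] = False"
  by (simp add: twist_parity_def)

lemma twist_parity_Cons [simp]:
  "twist_parity M (\<alpha> # as) = ((M \<alpha> = Cbar) \<noteq> twist_parity M as)"
  by (simp add: twist_parity_def)

lemma path_twist_Arrs: "path_twist M (Arrs as) z = cnj_if (twist_parity M as) z"
  unfolding path_twist_def
  by (induction as arbitrary: z) (auto simp: bm_twist_eq_cnj_if cnj_if_def)

lemma is_path_Arrs_Cons_Cons:
  "is_path Q (Arrs (\<alpha> # \<beta> # as)) \<longleftrightarrow>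
     \<alpha> \<in> Qa Q \<and> qt Q \<alpha> = qs Q \<beta> \<and> is_path Q (Arrs (\<beta> # as))"
  unfolding is_path_def by (auto simp: nth_Cons split: nat.splits)

definition cut_flip :: "('v, 'a) quiver \<Rightarrow> 'v set \<Rightarrow> ('a \<Rightarrow> cbimod) \<Rightarrow> 'a \<Rightarrow> cbimod" where
  "cut_flip Q S M \<alpha> =
     (if \<alpha> \<in> Qa Q \<and> (qs Q \<alpha> \<in> S \<longleftrightarrow> qt Q \<alpha> \<notin> S) then flip_bimod (M \<alpha>) else M \<alpha>)"

lemma cut_flip_eq_Cbar_iff:
  assumes "\<alpha> \<in> Qa Q"
  shows "cut_flip Q S M \<alpha> = Cbar \<longleftrightarrow> (M \<alpha> = Cbar) \<noteq> ((qs Q \<alpha> \<in> S) \<noteq> (qt Q \<alpha> \<in> S))"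
  using assms by (cases "M \<alpha>") (auto simp: cut_flip_def)

lemma twist_parity_cut_flip:
  assumes "is_path Q (Arrs as)"
  shows "twist_parity (cut_flip Q S M) as =
           (twist_parity M as \<noteq> ((qs Q (hd as) \<in> S) \<noteq> (qt Q (last as) \<in> S)))"
  using assms
proof (induction as rule: induct_list012)
  case 1
  then show ?case by (simp add: is_path_def)
next
  case (2 \<alpha>)
  then show ?case by (auto simp: is_path_def cut_flip_eq_Cbar_iff)
next
  case (3 \<alpha> \<beta> as)
  then have "\<alpha> \<in> Qa Q" "qt Q \<alpha> = qs Q \<beta>" "is_path Q (Arrs (\<beta> # as))"
    by (simp_all add: is_path_Arrs_Cons_Cons)
  with "3.IH"(2) show ?case by (auto simp: cut_flip_eq_Cbar_iff)
qed

lemma path_twist_cut_flip: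
  assumes "is_path Q p"
  shows "path_twist (cut_flip Q S M) p z =
           cnj_if (ptgt Q p \<in> S) (path_twist M p (cnj_if (psrc Q p \<in> S) z))"
proof (cases p)
  case (Triv i)
  then show ?thesis by (simp add: path_twist_def)
next
  case (Arrs as)
  then show ?thesis
    using twist_parity_cut_flip[of Q as S M] assms by (auto simp: path_twist_Arrs)
qed

lemma ptgt_pconcat:
  assumes "is_path Q q" "psrc Q q = ptgt Q p"
  shows "ptgt Q (pconcat q p) = ptgt Q q"
  using assms by (cases q; cases p) (auto simp: is_path_def)

definition conj_ending_in ::
    "('v, 'a) quiver \<Rightarrow> 'v set \<Rightarrow> (('v, 'a) qpath \<Rightarrow> complex) \<Rightarrow> ('v, 'a) qpath \<Rightarrow> complex" where
  "conj_ending_in Q S x = (\<lambda>p. cnj_if (ptgt Q p \<in> S) (x p))"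

lemma conj_ending_in_conj_ending_in [simp]: "conj_ending_in Q S (conj_ending_in Q S x) = x"
  by (simp add: conj_ending_in_def)

lemma conj_ending_in_eq_0_iff [simp]: "conj_ending_in Q S x p = 0 \<longleftrightarrow> x p = 0"
  by (simp add: conj_ending_in_def)

lemma conj_ending_in_summand: "x \<in> summand Q p \<Longrightarrow> conj_ending_in Q S x \<in> summand Q p"
  by (simp add: summand_def tcarrier_def)

lemma image_conj_ending_in_summand: "conj_ending_in Q S ` summand Q p = summand Q p"
proof
  show "conj_ending_in Q S ` summand Q p \<subseteq> summand Q p"
    using conj_ending_in_summand by blast
  show "summand Q p \<subseteq> conj_ending_in Q S ` summand Q p"
  proof
    fix x
    assume "x \<in> summand Q p"
    then show "x \<in> conj_ending_in Q S ` summand Q p"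
      by (intro image_eqI[where x = "conj_ending_in Q S x"] conj_ending_in_summand) simp_all
  qed
qed

lemma conj_ending_in_tmul:
  assumes "x \<in> tcarrier Q"
  shows "conj_ending_in Q S (tmul Q M x y) =
           tmul Q (cut_flip Q S M) (conj_ending_in Q S x) (conj_ending_in Q S y)"
proof
  fix r
  let ?Z = "{(q, p). x q \<noteq> 0 \<and> y p \<noteq> 0 \<and> psrc Q q = ptgt Q p \<and> pconcat q p = r}"
  have summand_eq: "cnj_if (ptgt Q r \<in> S) (x q * path_twist M q (y p)) =
      conj_ending_in Q S x q * path_twist (cut_flip Q S M) q (conj_ending_in Q S y p)"
    if "(q, p) \<in> ?Z" for q p
  proof -
    from that have match: "psrc Q q = ptgt Q p" and r: "r = pconcat q p"
      and q: "is_path Q q"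
      using assms by (auto simp: tcarrier_def)
    show ?thesis
      using ptgt_pconcat[OF q match] path_twist_cut_flip[OF q] match r
      by (simp add: conj_ending_in_def cnj_if_mult)
  qed
  have "conj_ending_in Q S (tmul Q M x y) r =
          (\<Sum>(q, p)\<in>?Z. cnj_if (ptgt Q r \<in> S) (x q * path_twist M q (y p)))"
    by (simp add: conj_ending_in_def tmul_def cnj_if_sum case_prod_unfold)
  also have "\<dots> = (\<Sum>(q, p)\<in>?Z. conj_ending_in Q S x q *
                     path_twist (cut_flip Q S M) q (conj_ending_in Q S y p))"
    using summand_eq by (intro sum.cong refl) auto
  also have "\<dots> = tmul Q (cut_flip Q S M) (conj_ending_in Q S x) (conj_ending_in Q S y) r"
    by (simp add: tmul_def)
  finally show "conj_ending_in Q S (tmul Q M x y) r =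
                  tmul Q (cut_flip Q S M) (conj_ending_in Q S x) (conj_ending_in Q S y) r" .
qed

lemma R_alg_iso_conj_ending_in: "R_alg_iso Q M (cut_flip Q S M) (conj_ending_in Q S)"
  unfolding R_alg_iso_def
proof (intro conjI ballI allI)
  show "bij_betw (conj_ending_in Q S) (tcarrier Q) (tcarrier Q)"
    by (rule bij_betw_byWitness[where f' = "conj_ending_in Q S"]) (auto simp: tcarrier_def)
  show "conj_ending_in Q S (tone Q) = tone Q"
    by (auto simp: conj_ending_in_def tone_def cnj_if_def split: qpath.splits)
  fix x y r
  show "conj_ending_in Q S (tadd x y) = tadd (conj_ending_in Q S x) (conj_ending_in Q S y)"
    by (auto simp: conj_ending_in_def tadd_def cnj_if_def)
  show "conj_ending_in Q S (tscale r x) = tscale r (conj_ending_in Q S x)"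
    by (auto simp: conj_ending_in_def tscale_def cnj_if_def)
  assume "x \<in> tcarrier Q"
  then show "conj_ending_in Q S (tmul Q M x y) =
               tmul Q (cut_flip Q S M) (conj_ending_in Q S x) (conj_ending_in Q S y)"
    by (rule conj_ending_in_tmul)
qed

theorem lemma3p3:
  fixes Q :: "('v, 'a) quiver" and M :: "'a \<Rightarrow> cbimod" and v :: 'v
  assumes "wf_quiver Q"
    and "v \<in> Qv Q"
    and "\<forall>\<alpha>\<in>Qa Q. \<not> (qs Q \<alpha> = v \<and> qt Q \<alpha> = v)"
  defines "M' \<equiv> (\<lambda>\<alpha>. if \<alpha> \<in> Qa Q \<and> (qs Q \<alpha> = v \<or> qt Q \<alpha> = v)
                       then flip_bimod (M \<alpha>) else M \<alpha>)"
  shows "\<exists>\<phi>. R_alg_iso Q M M' \<phi> \<and>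
           (\<forall>p. is_path Q p \<longrightarrow> \<phi> ` summand Q p = summand Q p)"
proof -
  have "M' = cut_flip Q {v} M"
    using assms(3) by (auto simp: M'_def cut_flip_def fun_eq_iff)
  then show ?thesis
    using R_alg_iso_conj_ending_in image_conj_ending_in_summand by blast
qed

end
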